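(* For every base $\mathcal{B}$, atomic multiset $L$ and ILL formula $\varphi$: if $\Vdash^L_{\mathcal{B}}!\varphi$, then $\Vdash^L_{\mathcal{B}}1$.
   Context: Fix a set $\mathbb{A}$ of propositional atoms. ILL formulae: $\phi ::= p\in\mathbb{A} \mid \top \mid 0 \mid 1 \mid \phi\multimap\phi \mid \phi\otimes\phi \mid \phi\,\&\,\phi \mid \phi\oplus\phi \mid\ !\phi$. All multisets are finite; "$\Gamma,\Delta$" denotes multiset union. Atomic rules and bases: an atomic sequent is $P\Rightarrow p$ with $P$ a multiset of atoms, $p$ an atom. An atomic box is a multiset of atomic sequents. An atomic rule is a triple $\langle\mathbf{A},\mathbf{S},p\rangle$ with $\mathbf{A}$ a multiset of atomic boxes, $\mathbf{S}$ an atomic box, $p$ an atom. A base is a set of atomic rules. An atom $p$ is persistent in $\mathcal{B}$ if some $\langle\varnothing,\mathbf{S},p\rangle\in\mathcal{B}$ has $\mathbf{S}\neq\varnothing$. Derivability $\vdash_{\mathcal{B}}$: (Ref) $p\vdash_{\mathcal{B}}p$; (App) if $\langle\mathbf{A},\mathbf{S},p\rangle\in\mathcal{B}$ with $\mathbf{A}=\{\mathbf{T}_1,\dots,\mathbf{T}_m\}$, and there are atomic multisets $C_1,\dots,C_n$ ($n\ge m$) and a multiset $D=\{d_{m+1},\dots,d_n\}$ of atoms persistent in $\mathcal{B}$ such that $C_i,Q\vdash_{\mathcal{B}}q$ for every $i\le m$ and every $Q\Rightarrow q\in\mathbf{T}_i$, $C_j\vdash_{\mathcal{B}}d_j$ for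 every $m<j\le n$, and $D,U\vdash_{\mathcal{B}}v$ for every $U\Rightarrow v\in\mathbf{S}$, then $C_1,\dots,C_n\vdash_{\mathcal{B}}p$. Support $\Vdash^L_{\mathcal{B}}$ (base $\mathcal{B}$, atomic multiset $L$), by induction on formulae: $\Vdash^L_{\mathcal{B}}p$ iff $L\vdash_{\mathcal{B}}p$; $\Vdash^L_{\mathcal{B}}\varphi\multimap\psi$ iff $\varphi\Vdash^L_{\mathcal{B}}\psi$; $\Vdash^L_{\mathcal{B}}\varphi\otimes\psi$ iff for all $\mathcal{C}\supseteq\mathcal{B}$, atomic $K$, atoms $p$: if $\varphi,\psi\Vdash^K_{\mathcal{C}}p$ then $\Vdash^{L,K}_{\mathcal{C}}p$; $\Vdash^L_{\mathcal{B}}1$ iff for all $\mathcal{C}\supseteq\mathcal{B}$, $K$, $p$: if $\Vdash^K_{\mathcal{C}}p$ then $\Vdash^{L,K}_{\mathcal{C}}p$; $\Vdash^L_{\mathcal{B}}\varphi\&\psi$ iff $\Vdash^L_{\mathcal{B}}\varphi$ and $\Vdash^L_{\mathcal{B}}\psi$; $\Vdash^L_{\mathcal{B}}\varphi\oplus\psi$ iff for all $\mathcal{C}\supseteq\mathcal{B}$, $K$, $p$: if $\varphi\Vdash^K_{\mathcal{C}}p$ and $\psi\Vdash^K_{\mathcal{C}}p$ then $\Vdash^{L,K}_{\mathcal{C}}p$; $\Vdash^L_{\mathcal{B}}0$ iff $\Vdash^{L,K}_{\mathcal{B}}p$ for all atoms $p$ and atomic $K$; $\Vdash^L_{\mathcal{B}}\top$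 always; $\Vdash^L_{\mathcal{B}}!\varphi$ iff for all $\mathcal{C}\supseteq\mathcal{B}$, $K$, $p$: if (for all $\mathcal{D}\supseteq\mathcal{C}$, $\Vdash^{\varnothing}_{\mathcal{D}}\varphi$ implies $\Vdash^K_{\mathcal{D}}p$) then $\Vdash^{L,K}_{\mathcal{C}}p$. For nonempty multisets: $\Vdash^L_{\mathcal{B}}\Gamma,\Delta$ iff $L=K,M$ with $\Vdash^K_{\mathcal{B}}\Gamma$ and $\Vdash^M_{\mathcal{B}}\Delta$. For a nonempty antecedent written $!\Delta,\Theta$, where $!\Delta$ collects the formulae with top-level connective $!$ (with $\Delta$ the formulae under those $!$) and $\Theta$ contains none: $!\Delta,\Theta\Vdash^L_{\mathcal{B}}\varphi$ iff for all $\mathcal{C}\supseteq\mathcal{B}$ and atomic $K$, if $\Vdash^{\varnothing}_{\mathcal{C}}\delta$ for every $\delta\in\Delta$ and $\Vdash^K_{\mathcal{C}}\Theta$ then $\Vdash^{L,K}_{\mathcal{C}}\varphi$ (when $\Theta$ is empty, $K$ is empty). An empty antecedent: $\varnothing\Vdash^L_{\mathcal{B}}\varphi$ means $\Vdash^L_{\mathcal{B}}\varphi$. *)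

theory Defs
  imports Main "HOL-Library.Multiset"
begin

datatype 'a ill =
    Atom 'a | Top | Zero | One
  | Lolli "'a ill" "'a ill"
  | Tensor "'a ill" "'a ill"
  | With "'a ill" "'a ill"
  | Plus "'a ill" "'a ill"
  | Bang "'a ill"

type_synonym 'a aseq = "'a multiset \<times> 'a"
type_synonym 'a abox = "'a aseq multiset"
type_synonym 'a arule = "'a abox multiset \<times> 'a abox \<times> 'a"
type_synonym 'a base = "'a arule set"

definition persistent :: "'a base \<Rightarrow> 'a \<Rightarrow> bool" where
  "persistent B p \<longleftrightarrow> (\<exists>S. ({#}, S, p) \<in> B \<and> S \<noteq> {#})"

text \<open>Derivability in a base. The boxes T_1..T_m of the rule are listed as As,
  the multisets C_1..C_m as Cs1, C_{m+1}..C_n as Cs2 and d_{m+1}..d_n as ds.\<close>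
inductive deriv :: "'a base \<Rightarrow> 'a multiset \<Rightarrow> 'a \<Rightarrow> bool" where
  Ref: "deriv B {#p#} p"
| App: "\<lbrakk> (A, S, p) \<in> B; mset As = A;
          length Cs1 = length As; length Cs2 = length ds;
          \<forall>i < length As. \<forall>Q q. (Q, q) \<in># As ! i \<longrightarrow> deriv B (Cs1 ! i + Q) q;
          \<forall>j < length ds. persistent B (ds ! j) \<and> deriv B (Cs2 ! j) (ds ! j);
          \<forall>U v. (U, v) \<in># S \<longrightarrow> deriv B (mset ds + U) v \<rbrakk>
        \<Longrightarrow> deriv B (sum_list Cs1 + sum_list Cs2) p"

text \<open>For a single-formula antecedent f, the hypothesis
  "for the extension C and atomic K, K supports f" is rendered as:
  if f = !d then K is empty and d is supported with the empty multiset,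
  otherwise f is supported in C with K (this is the paper's clause for !Delta,Theta).\<close>
fun supp :: "'a base \<Rightarrow> 'a multiset \<Rightarrow> 'a ill \<Rightarrow> bool" where
  "supp B L (Atom p) = deriv B L p"
| "supp B L (Lolli \<phi> \<psi>) =
     (\<forall>C K. B \<subseteq> C \<longrightarrow>
        (case \<phi> of Bang \<delta> \<Rightarrow> K = {#} \<and> supp C {#} \<delta> | _ \<Rightarrow> supp C K \<phi>) \<longrightarrow>
        supp C (L + K) \<psi>)"
| "supp B L (Tensor \<phi> \<psi>) =
     (\<forall>C K p. B \<subseteq> C \<longrightarrow>
        (\<forall>D K'. C \<subseteq> D \<longrightarrow>
           (\<exists>K1 K2. K' = K1 + K2 \<and>
              (case \<phi> of Bang \<delta> \<Rightarrow> K1 = {#} \<and> supp D {#} \<delta> | _ \<Rightarrow> supp D K1 \<phi>) \<and>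
              (case \<psi> of Bang \<delta> \<Rightarrow> K2 = {#} \<and> supp D {#} \<delta> | _ \<Rightarrow> supp D K2 \<psi>)) \<longrightarrow>
           deriv D (K + K') p) \<longrightarrow>
        deriv C (L + K) p)"
| "supp B L One =
     (\<forall>C K p. B \<subseteq> C \<longrightarrow> deriv C K p \<longrightarrow> deriv C (L + K) p)"
| "supp B L (With \<phi> \<psi>) = (supp B L \<phi> \<and> supp B L \<psi>)"
| "supp B L (Plus \<phi> \<psi>) =
     (\<forall>C K p. B \<subseteq> C \<longrightarrow>
        (\<forall>D K'. C \<subseteq> D \<longrightarrow>
           (case \<phi> of Bang \<delta> \<Rightarrow> K' = {#} \<and> supp D {#} \<delta> | _ \<Rightarrow> supp D K' \<phi>) \<longrightarrow>
           deriv D (K + K') p) \<longrightarrow>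
        (\<forall>D K'. C \<subseteq> D \<longrightarrow>
           (case \<psi> of Bang \<delta> \<Rightarrow> K' = {#} \<and> supp D {#} \<delta> | _ \<Rightarrow> supp D K' \<psi>) \<longrightarrow>
           deriv D (K + K') p) \<longrightarrow>
        deriv C (L + K) p)"
| "supp B L Zero = (\<forall>p K. deriv B (L + K) p)"
| "supp B L Top = True"
| "supp B L (Bang \<phi>) =
     (\<forall>C K p. B \<subseteq> C \<longrightarrow>
        (\<forall>D. C \<subseteq> D \<longrightarrow> supp D {#} \<phi> \<longrightarrow> deriv D K p) \<longrightarrow>
        deriv C (L + K) p)"

end

theory Submission
  imports Defs
begin

lemma persistent_mono: "persistent B p \<Longrightarrow> B \<subseteq> D \<Longrightarrow> persistent D p"
  unfolding persistent_def by blast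

lemma deriv_mono: "deriv B K p \<Longrightarrow> B \<subseteq> D \<Longrightarrow> deriv D K p"
proof (induction rule: deriv.induct)
  case (Ref B p)
  show ?case by (rule deriv.Ref)
next
  case (App A S p B As Cs1 Cs2 ds)
  show ?case
  proof (rule deriv.App)
    show "(A, S, p) \<in> D" using App.hyps(1) App.prems by blast
    show "\<forall>j < length ds. persistent D (ds ! j) \<and> deriv D (Cs2 ! j) (ds ! j)"
      using App.IH(2) App.prems by (auto intro: persistent_mono)
  qed (use App in auto)
qed

text \<open>Since derivability is monotone in the base, any K deriving p in C meets
  the premise of the clause for \<open>!\<phi>\<close>, whatever \<open>\<phi>\<close> is.\<close>

theorem lemma11:
  fixes B :: "'a base" and L :: "'a multiset" and \<phi> :: "'a ill"
  assumes "supp B L (Bang \<phi>)"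
  shows "supp B L One"
  unfolding supp.simps
proof (intro allI impI)
  fix C K p
  assume "B \<subseteq> C" and "deriv C K p"
  then have "\<forall>D. C \<subseteq> D \<longrightarrow> supp D {#} \<phi> \<longrightarrow> deriv D K p"
    by (auto intro: deriv_mono)
  with assms \<open>B \<subseteq> C\<close> show "deriv C (L + K) p" by simp
qed

end
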